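(* Let $k\in\{1,2,\dots\}\cup\{\infty\}$ and $a,b>0$ with $a,b\neq1$. Then $D^k(\mathbb{R},0)\cap w_b\,D^k(\mathbb{R},0)\,w_a$ equals $\varnothing$ if $a\neq b$ and $a\neq 1/b$; equals $E^{k,+}(\mathbb{R},0)$ if $ab=1$; and equals $E^{k,-}(\mathbb{R},0)$ if $a=b$.
   Context: $D^k(\mathbb{R},0)$ is the group of $C^k$-diffeomorphisms of $\mathbb{R}$ fixing $0$. $E^k(\mathbb{R},0)$ is its subgroup of $h$ with $h^{(i)}(0)=0$ for all integers $2\le i\le k$ (all $i\ge2$ if $k=\infty$); $E^{k,+}(\mathbb{R},0)$ and $E^{k,-}(\mathbb{R},0)$ denote its orientation preserving and orientation reversing elements. For $c>0$, $w_c\colon\mathbb{R}\to\mathbb{R}$ is the homeomorphism $w_c(x)=x$ for $x\le0$, $w_c(x)=cx$ for $x>0$, and $w_bDw_a=\{w_b\circ f\circ w_a: f\in D^k(\mathbb{R},0)\}$. *)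

theory Defs
  imports "HOL-Analysis.Analysis" "HOL-Library.Extended_Nat"
begin

definition Ck :: "enat \<Rightarrow> (real \<Rightarrow> real) \<Rightarrow> bool" where
  "Ck k f \<longleftrightarrow>
     (\<forall>n::nat. enat n < k \<longrightarrow> (\<forall>x. ((deriv ^^ n) f) differentiable (at x))) \<and>
     (\<forall>n::nat. enat n \<le> k \<longrightarrow> continuous_on UNIV ((deriv ^^ n) f))"

definition Dk :: "enat \<Rightarrow> (real \<Rightarrow> real) set" where
  "Dk k = {f. bij f \<and> Ck k f \<and> Ck k (inv f) \<and> f 0 = 0}"

definition Ek :: "enat \<Rightarrow> (real \<Rightarrow> real) set" where
  "Ek k = {h \<in> Dk k. \<forall>i::nat. 2 \<le> i \<and> enat i \<le> k \<longrightarrow> (deriv ^^ i) h 0 = 0}"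

definition Ek_plus :: "enat \<Rightarrow> (real \<Rightarrow> real) set" where
  "Ek_plus k = {h \<in> Ek k. strict_mono h}"

definition Ek_minus :: "enat \<Rightarrow> (real \<Rightarrow> real) set" where
  "Ek_minus k = {h \<in> Ek k. \<forall>x y. x < y \<longrightarrow> h y < h x}"

definition w :: "real \<Rightarrow> real \<Rightarrow> real" where
  "w c x = (if x \<le> 0 then x else c * x)"

definition wDw :: "enat \<Rightarrow> real \<Rightarrow> real \<Rightarrow> (real \<Rightarrow> real) set" where
  "wDw k b a = {w b \<circ> f \<circ> w a | f. f \<in> Dk k}"

end

theory Submission
  imports Defs
begin

(* If h = w_b o f o w_a with f a diffeomorphism fixing 0, then f is strictly monotone, so h equals
   c1 * f x for x <= 0 and c2 * f (a x) for x > 0, where (c1, c2) = (1, b) if f increases and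
   (b, 1) if it decreases. Since h and f are C^k, the one-sided limits of the m-th derivatives at 0
   agree: c1 f^(m)(0) = c2 a^m f^(m)(0) for m <= k. For m = 1 this gives c1 = c2 a, i.e. ab = 1
   resp. a = b; for m >= 2 the factor a^(m-1) is not 1, so f^(m)(0) = 0 and hence h^(m)(0) = 0.
   Conversely, for h in E^k the map w_(1/b) o h o w_(1/a) is of the same two-sided form, and it is
   C^k because its one-sided derivatives at 0 match: the first ones by the relation between a and b,
   the higher ones because they vanish. Its inverse is C^k by the inverse function theorem. *)

fun Cn :: "nat \<Rightarrow> (real \<Rightarrow> real) \<Rightarrow> bool" where
  "Cn 0 f \<longleftrightarrow> continuous_on UNIV f"
| "Cn (Suc n) f \<longleftrightarrow> (\<forall>x. f differentiable at x) \<and> Cn n (deriv f)"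

lemma Cn_iff:
  "Cn n f \<longleftrightarrow> (\<forall>m<n. \<forall>x. (deriv ^^ m) f differentiable at x)
                \<and> (\<forall>m\<le>n. continuous_on UNIV ((deriv ^^ m) f))"
proof (induction n arbitrary: f)
  case (Suc n)
  have All_le_Suc2: "(\<forall>m\<le>Suc n. P m) \<longleftrightarrow> P 0 \<and> (\<forall>m\<le>n. P (Suc m))" for P
    using All_less_Suc2[of "Suc n" P] by (simp add: less_Suc_eq_le)
  have "continuous_on UNIV f" if "\<forall>x. f differentiable at x"
    using that differentiable_imp_continuous_within continuous_at_imp_continuous_on by blast
  then show ?case
    unfolding Cn.simps Suc.IH All_less_Suc2 All_le_Suc2 funpow_0 funpow_Suc_right o_apply
    by blast
qed simp

lemma Ck_iff_Cn: "Ck k f \<longleftrightarrow> (\<forall>n. enat n \<le> k \<longrightarrow> Cn n f)"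
  unfolding Ck_def Cn_iff
  by (metis Suc_ile_eq enat_ord_simps(1,2) less_imp_le order_trans order.refl)

lemma Cn_le: "m \<le> n \<Longrightarrow> Cn n f \<Longrightarrow> Cn m f"
  unfolding Cn_iff by auto

lemma differentiable_imp_DERIV_deriv:
  "f differentiable at x \<Longrightarrow> (f has_real_derivative deriv f x) (at x)"
  using DERIV_deriv_iff_real_differentiable by blast

lemma Cn_const: "Cn n (\<lambda>x. c)"
  by (induction n arbitrary: c) simp_all

lemma Cn_ident: "Cn n (\<lambda>x. x)"
  by (cases n) (simp_all add: Cn_const)

lemma Cn_add: "Cn n f \<Longrightarrow> Cn n g \<Longrightarrow> Cn n (\<lambda>x. f x + g x)"
proof (induction n arbitrary: f g)
  case (Suc n)
  then have "deriv (\<lambda>x. f x + g x) = (\<lambda>x. deriv f x + deriv g x)"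
    by (intro ext DERIV_imp_deriv) (auto intro!: derivative_eq_intros differentiable_imp_DERIV_deriv)
  with Suc show ?case by auto
qed (simp add: continuous_on_add)

lemma Cn_mult: "Cn n f \<Longrightarrow> Cn n g \<Longrightarrow> Cn n (\<lambda>x. f x * g x)"
proof (induction n arbitrary: f g)
  case (Suc n)
  then have "deriv (\<lambda>x. f x * g x) = (\<lambda>x. deriv f x * g x + f x * deriv g x)"
    by (intro ext DERIV_imp_deriv) (auto intro!: derivative_eq_intros differentiable_imp_DERIV_deriv)
  moreover have "Cn n f" "Cn n g"
    using Suc.prems Cn_le le_SucI by blast+
  ultimately show ?case
    using Suc by (auto intro!: Cn_add)
qed (simp add: continuous_on_mult)

lemma Cn_compose: "Cn n f \<Longrightarrow> Cn n g \<Longrightarrow> Cn n (\<lambda>x. f (g x))"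
proof (induction n arbitrary: f g)
  case 0
  then show ?case
    by (simp add: continuous_on_compose2[of UNIV f UNIV g])
next
  case (Suc n)
  have chain: "((\<lambda>x. f (g x)) has_real_derivative deriv f (g x) * deriv g x) (at x)" for x
    using Suc.prems by (intro DERIV_chain2 differentiable_imp_DERIV_deriv) auto
  then have "deriv (\<lambda>x. f (g x)) = (\<lambda>x. deriv f (g x) * deriv g x)"
    by (intro ext DERIV_imp_deriv)
  moreover have "Cn n g"
    using Suc.prems Cn_le le_SucI by blast
  ultimately show ?case
    using Suc chain real_differentiable_def by (auto intro!: Cn_mult)
qed

lemma Cn_inverse: "Cn n g \<Longrightarrow> \<forall>x. g x \<noteq> 0 \<Longrightarrow> Cn n (\<lambda>x. inverse (g x))"
proof (induction n arbitrary: g)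
  case (Suc n)
  have "Cn n g"
    using Suc.prems Cn_le le_SucI by blast
  have "deriv (\<lambda>x. inverse (g x)) = (\<lambda>x. (- 1) * deriv g x * (inverse (g x) * inverse (g x)))"
    using Suc.prems by (intro ext DERIV_imp_deriv)
      (auto intro!: derivative_eq_intros differentiable_imp_DERIV_deriv simp: power2_eq_square)
  moreover have "Cn n (\<lambda>x. (- 1) * deriv g x * (inverse (g x) * inverse (g x)))"
    using Suc \<open>Cn n g\<close> by (intro Cn_mult Cn_const) auto
  moreover have "\<forall>x. (\<lambda>x. inverse (g x)) differentiable at x"
    using Suc.prems by (auto intro!: derivative_intros)
  ultimately show ?case
    by simp
qed (simp add: continuous_on_inverse)

lemma Cn_inverse_function:
  assumes f: "Cn (Suc n) f" and inv: "\<forall>x. u (f x) = x" "\<forall>y. f (u y) = y"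
    and u: "continuous_on UNIV u" and nz: "\<forall>x. deriv f x \<noteq> 0"
  shows "Cn (Suc n) u"
proof -
  have du: "(u has_real_derivative inverse (deriv f (u y))) (at y)" for y
  proof (rule DERIV_inverse_function[where a="y - 1" and b="y + 1"])
    show "(f has_real_derivative deriv f (u y)) (at (u y))"
      using f by (simp add: differentiable_imp_DERIV_deriv)
    show "isCont u y"
      using u by (simp add: continuous_on_eq_continuous_at)
  qed (use nz inv in auto)
  then have deriv_u: "deriv u = (\<lambda>y. inverse (deriv f (u y)))"
    by (intro ext DERIV_imp_deriv)
  have "Cn m u" if "m \<le> Suc n" for m
    using that
  proof (induction m)
    case 0
    then show ?case using u by simp
  next
    case (Suc m)
    have "m \<le> n"
      using Suc.prems by simp
    moreover have "Cn n (deriv f)"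
      using f by simp
    ultimately have "Cn m (deriv f)"
      by (rule Cn_le)
    moreover have "Cn m u"
      using Suc by simp
    ultimately have "Cn m (\<lambda>y. deriv f (u y))"
      by (rule Cn_compose)
    then have "Cn m (\<lambda>y. inverse (deriv f (u y)))"
      using nz by (simp add: Cn_inverse)
    then show ?case
      using du deriv_u real_differentiable_def by auto
  qed
  then show ?thesis by blast
qed

lemma deriv_nonzero_if_left_inverse:
  fixes f u :: "real \<Rightarrow> real"
  assumes "\<forall>x. u (f x) = x" "f differentiable at x" "u differentiable at (f x)"
  shows "deriv f x \<noteq> 0"
proof -
  have "deriv u (f x) * deriv f x = deriv (u \<circ> f) x"
    using assms by (simp add: real_derivative_chain)
  also have "u \<circ> f = id"
    using assms(1) by auto
  finally show ?thesis by auto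
qed

lemma higher_deriv_scale:
  assumes "Cn m u"
  shows "(deriv ^^ m) (\<lambda>x. c * u (e * x)) = (\<lambda>x. c * e ^ m * (deriv ^^ m) u (e * x))"
  using assms
proof (induction m)
  case (Suc m)
  have "(deriv ^^ m) u differentiable at y" for y
    using Suc.prems unfolding Cn_iff by blast
  then have "((\<lambda>x. c * e ^ m * (deriv ^^ m) u (e * x)) has_real_derivative
      c * e ^ m * (deriv ((deriv ^^ m) u) (e * x) * e)) (at x)" for x
    by (intro DERIV_cmult DERIV_chain2[OF differentiable_imp_DERIV_deriv DERIV_cmult_Id])
  then have "deriv (\<lambda>x. c * e ^ m * (deriv ^^ m) u (e * x))
      = (\<lambda>x. c * e ^ Suc m * (deriv ^^ Suc m) u (e * x))"
    by (intro ext DERIV_imp_deriv) (simp add: algebra_simps)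
  moreover have "Cn m u"
    using Cn_le[OF le_SucI[OF order.refl] Suc.prems] .
  ultimately show ?case
    using Suc.IH by simp
qed simp

lemma DERIV_if_le_0:
  assumes "\<forall>x. p differentiable at x" "\<forall>x. q differentiable at x"
    and "p 0 = q 0" "deriv p 0 = deriv q 0"
  shows "((\<lambda>x. if x \<le> 0 then p x else q x) has_real_derivative
           (if x \<le> 0 then deriv p x else deriv q x)) (at x)"
proof -
  have "((\<lambda>x. if x \<in> {..0} then p x else q x) has_derivative
      (if x \<in> {..0} then (*) (deriv p x) else (*) (deriv q x))) (at x within {..0} \<union> {0<..})"
  proof (rule has_derivative_If_within_closures)
    show "(p has_derivative (*) (deriv p x)) (at x within {..0} \<union> (closure {..0} \<inter> closure {0<..}))"
      using assms(1) differentiable_imp_DERIV_deriv has_field_derivative_def has_derivative_at_withinI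
      by blast
    show "(q has_derivative (*) (deriv q x)) (at x within {0<..} \<union> (closure {..0} \<inter> closure {0<..}))"
      using assms(2) differentiable_imp_DERIV_deriv has_field_derivative_def has_derivative_at_withinI
      by blast
  qed (use assms(3,4) in auto)
  moreover have "{..0} \<union> {0<..} = (UNIV :: real set)"
    by auto
  ultimately show ?thesis
    by (simp add: has_field_derivative_def if_distrib[of "(*)"] cong: if_cong)
qed

lemma Cn_if_le_0:
  assumes "Cn n p" "Cn n q" "\<forall>m\<le>n. (deriv ^^ m) p 0 = (deriv ^^ m) q 0"
  shows "Cn n (\<lambda>x. if x \<le> 0 then p x else q x)"
  using assms
proof (induction n arbitrary: p q)
  case 0
  then show ?case
    by (simp, intro continuous_on_cases_le[where h="\<lambda>x. x" and a=0, of UNIV, simplified])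
       (auto intro: continuous_on_subset)
next
  case (Suc n)
  have "p 0 = q 0" "deriv p 0 = deriv q 0"
    using Suc.prems(3)[rule_format, of 0] Suc.prems(3)[rule_format, of 1] by simp_all
  then have D: "((\<lambda>x. if x \<le> 0 then p x else q x) has_real_derivative
      (if x \<le> 0 then deriv p x else deriv q x)) (at x)" for x
    using Suc.prems by (intro DERIV_if_le_0) auto
  then have "deriv (\<lambda>x. if x \<le> 0 then p x else q x) = (\<lambda>x. if x \<le> 0 then deriv p x else deriv q x)"
    by (intro ext DERIV_imp_deriv)
  moreover have "Cn n (\<lambda>x. if x \<le> 0 then deriv p x else deriv q x)"
    using Suc by (intro Suc.IH) (auto simp: funpow_Suc_right simp del: funpow.simps)
  moreover have "\<forall>x. (\<lambda>x. if x \<le> 0 then p x else q x) differentiable at x"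
    using D real_differentiable_def by blast
  ultimately show ?case
    by simp
qed

lemma continuous_eq_at_limit_point:
  fixes f g :: "'a::t2_space \<Rightarrow> 'b::t2_space"
  assumes "isCont f x" "isCont g x" "x islimpt S" "\<forall>y\<in>S. f y = g y"
  shows "f x = g x"
proof (rule tendsto_unique[of "at x within S" f])
  show "at x within S \<noteq> bot"
    using assms(3) trivial_limit_within by blast
  show "(f \<longlongrightarrow> f x) (at x within S)"
    using assms(1) continuous_at_imp_continuous_within continuous_within by blast
  have "(g \<longlongrightarrow> g x) (at x within S)"
    using assms(2) continuous_at_imp_continuous_within continuous_within by blast
  moreover have "eventually (\<lambda>y. f y = g y) (at x within S)"
    using assms(4) by (auto simp: eventually_at_filter)
  ultimately show "(f \<longlongrightarrow> g x) (at x within S)"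
    using tendsto_cong by blast
qed

definition split_scaling :: "real \<Rightarrow> real \<Rightarrow> real \<Rightarrow> (real \<Rightarrow> real) \<Rightarrow> real \<Rightarrow> real" where
  "split_scaling c1 c2 e h x = (if x \<le> 0 then c1 * h x else c2 * h (e * x))"

lemma higher_deriv_cmult:
  "Cn m h \<Longrightarrow> (deriv ^^ m) (\<lambda>x. c * h x) = (\<lambda>x. c * (deriv ^^ m) h x)"
  using higher_deriv_scale[of m h c 1] by simp

lemma higher_deriv_split_scaling_neg:
  assumes "Cn m h" "x < 0"
  shows "(deriv ^^ m) (split_scaling c1 c2 e h) x = c1 * (deriv ^^ m) h x"
proof -
  have "eventually (\<lambda>y. split_scaling c1 c2 e h y = c1 * h y) (nhds x)"
    using eventually_nhds_in_open[of "{..<0}" x] assms(2)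
    by (auto simp: split_scaling_def elim: eventually_mono)
  then have "(deriv ^^ m) (split_scaling c1 c2 e h) x = (deriv ^^ m) (\<lambda>y. c1 * h y) x"
    by (rule higher_deriv_cong_ev) simp
  with assms(1) show ?thesis
    by (simp add: higher_deriv_cmult)
qed

lemma higher_deriv_split_scaling_pos:
  assumes "Cn m h" "x > 0"
  shows "(deriv ^^ m) (split_scaling c1 c2 e h) x = c2 * e ^ m * (deriv ^^ m) h (e * x)"
proof -
  have "eventually (\<lambda>y. split_scaling c1 c2 e h y = c2 * h (e * y)) (nhds x)"
    using eventually_nhds_in_open[of "{0<..}" x] assms(2)
    by (auto simp: split_scaling_def elim: eventually_mono)
  then have "(deriv ^^ m) (split_scaling c1 c2 e h) x = (deriv ^^ m) (\<lambda>y. c2 * h (e * y)) x"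
    by (rule higher_deriv_cong_ev) simp
  with assms(1) show ?thesis
    by (simp add: higher_deriv_scale)
qed

lemma higher_deriv_split_scaling_0:
  assumes h: "Cn m h" and cont: "isCont ((deriv ^^ m) (split_scaling c1 c2 e h)) 0"
  shows "(deriv ^^ m) (split_scaling c1 c2 e h) 0 = c1 * (deriv ^^ m) h 0"
    and "(deriv ^^ m) (split_scaling c1 c2 e h) 0 = c2 * e ^ m * (deriv ^^ m) h 0"
proof -
  have "continuous_on UNIV ((deriv ^^ m) h)"
    using h unfolding Cn_iff by blast
  then have hm: "isCont ((deriv ^^ m) h) y" for y
    by (simp add: continuous_on_eq_continuous_at)
  have hm_scaled: "isCont (\<lambda>y. (deriv ^^ m) h (e * y)) 0"
    by (rule isCont_o2[OF _ hm]) (intro continuous_intros)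
  have limpt: "(0::real) islimpt {..<0}" "(0::real) islimpt {0<..}"
    using trivial_limit_at_left_real trivial_limit_at_right_real trivial_limit_within by blast+
  show "(deriv ^^ m) (split_scaling c1 c2 e h) 0 = c1 * (deriv ^^ m) h 0"
    by (rule continuous_eq_at_limit_point[where g="\<lambda>y. c1 * (deriv ^^ m) h y", OF cont _ limpt(1)])
      (use hm higher_deriv_split_scaling_neg[OF h] in auto)
  have "(deriv ^^ m) (split_scaling c1 c2 e h) 0 = c2 * e ^ m * (deriv ^^ m) h (e * 0)"
    by (rule continuous_eq_at_limit_point[where g="\<lambda>y. c2 * e ^ m * (deriv ^^ m) h (e * y)",
          OF cont _ limpt(2)])
      (use hm_scaled higher_deriv_split_scaling_pos[OF h] in auto)
  then show "(deriv ^^ m) (split_scaling c1 c2 e h) 0 = c2 * e ^ m * (deriv ^^ m) h 0"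
    by simp
qed

lemma Cn_split_scaling:
  assumes h: "Cn n h" and "h 0 = 0" "c1 = c2 * e"
    and flat: "\<forall>j. 2 \<le> j \<and> j \<le> n \<longrightarrow> (deriv ^^ j) h 0 = 0"
  shows "Cn n (split_scaling c1 c2 e h)"
proof -
  have "Cn n (\<lambda>x. if x \<le> 0 then c1 * h x else c2 * h (e * x))"
  proof (rule Cn_if_le_0)
    show "Cn n (\<lambda>x. c1 * h x)"
      using h by (rule Cn_mult[OF Cn_const])
    show "Cn n (\<lambda>x. c2 * h (e * x))"
      using h by (rule Cn_mult[OF Cn_const Cn_compose[OF _ Cn_mult[OF Cn_const Cn_ident]]])
    have "(deriv ^^ j) (\<lambda>x. c1 * h x) 0 = (deriv ^^ j) (\<lambda>x. c2 * h (e * x)) 0"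
      if "j \<le> n" for j
    proof -
      have "Cn j h"
        using Cn_le[OF that h] .
      moreover have "c1 * (deriv ^^ j) h 0 = c2 * e ^ j * (deriv ^^ j) h 0"
        using assms that by (cases "j = 0 \<or> j = 1") auto
      ultimately show ?thesis
        by (simp add: higher_deriv_cmult higher_deriv_scale)
    qed
    then show "\<forall>j\<le>n. (deriv ^^ j) (\<lambda>x. c1 * h x) 0 = (deriv ^^ j) (\<lambda>x. c2 * h (e * x)) 0"
      by blast
  qed
  then show ?thesis
    by (simp add: split_scaling_def[abs_def])
qed

lemma deriv_split_scaling_nonzero:
  assumes F: "Cn 1 (split_scaling c1 c2 e h)" and h: "Cn 1 h" and nz: "\<forall>x. deriv h x \<noteq> 0"
    and "c1 \<noteq> 0" "c2 \<noteq> 0" "e \<noteq> 0"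
  shows "deriv (split_scaling c1 c2 e h) x \<noteq> 0"
proof -
  have "isCont (deriv (split_scaling c1 c2 e h)) 0"
    using F by (simp add: continuous_on_eq_continuous_at)
  then have "deriv (split_scaling c1 c2 e h) 0 = c1 * deriv h 0"
    using higher_deriv_split_scaling_0(1)[OF h, of c1 c2 e] by simp
  moreover have "deriv (split_scaling c1 c2 e h) x = c1 * deriv h x" if "x < 0"
    using higher_deriv_split_scaling_neg[OF h that] by simp
  moreover have "deriv (split_scaling c1 c2 e h) x = c2 * e * deriv h (e * x)" if "x > 0"
    using higher_deriv_split_scaling_pos[OF h that] by simp
  ultimately show ?thesis
    using assms nz by (cases x "0::real" rule: linorder_cases) auto
qed

lemma Dk_Cn: "f \<in> Dk k \<Longrightarrow> enat n \<le> k \<Longrightarrow> Cn n f"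
  unfolding Dk_def Ck_iff_Cn by blast

lemma Dk_inv_Cn: "f \<in> Dk k \<Longrightarrow> enat n \<le> k \<Longrightarrow> Cn n (inv f)"
  unfolding Dk_def Ck_iff_Cn by blast

lemma Dk_deriv_nonzero:
  assumes f: "f \<in> Dk k" and k: "k \<ge> 1"
  shows "deriv f x \<noteq> 0"
proof (rule deriv_nonzero_if_left_inverse[where u="inv f"])
  show "\<forall>x. inv f (f x) = x"
    using f unfolding Dk_def by (simp add: bij_is_inj)
  have "enat (Suc 0) \<le> k"
    using k by (simp add: one_enat_def)
  then have "Cn (Suc 0) f" "Cn (Suc 0) (inv f)"
    using Dk_Cn[OF f] Dk_inv_Cn[OF f] by blast+
  then show "f differentiable at x" "inv f differentiable at (f x)"
    by simp_all
qed

lemma Dk_intro: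
  assumes f: "bij f" "f 0 = 0" "\<forall>n. enat n \<le> k \<longrightarrow> Cn n f"
    and inv: "continuous_on UNIV (inv f)" and nz: "\<forall>x. deriv f x \<noteq> 0"
  shows "f \<in> Dk k"
proof -
  have "Cn n (inv f)" if "enat n \<le> k" for n
  proof (cases n)
    case 0
    then show ?thesis using inv by simp
  next
    case (Suc m)
    have "\<forall>x. inv f (f x) = x" "\<forall>y. f (inv f y) = y"
      using f(1) by (simp_all add: bij_is_inj bij_is_surj surj_f_inv_f)
    with Suc show ?thesis
      using Cn_inverse_function[of m f "inv f"] f(3) that inv nz by blast
  qed
  then show ?thesis
    using f unfolding Dk_def Ck_iff_Cn by blast
qed

lemma Dk_strictly_monotone:
  assumes f: "f \<in> Dk k" and k: "k \<ge> 1"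
  shows "strict_mono f \<or> (\<forall>x y. x < y \<longrightarrow> f y < f x)"
proof -
  have "enat (Suc 0) \<le> k"
    using k by (simp add: one_enat_def)
  then have "Cn (Suc 0) f"
    by (rule Dk_Cn[OF f])
  then have D: "(f has_real_derivative deriv f x) (at x)" for x
    by (simp add: differentiable_imp_DERIV_deriv)
  have cont: "continuous_on UNIV (deriv f)"
    using \<open>Cn (Suc 0) f\<close> by simp
  have nz: "deriv f x \<noteq> 0" for x
    using Dk_deriv_nonzero[OF f k] .
  have "(\<forall>x. deriv f x > 0) \<or> (\<forall>x. deriv f x < 0)"
  proof (rule ccontr)
    assume "\<not> ?thesis"
    then obtain x y where "deriv f x > 0" "deriv f y < 0"
      using nz by (meson linorder_neqE_linordered_idom)
    moreover have "connected (range (deriv f))"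
      using connected_continuous_image[OF cont connected_UNIV] .
    ultimately have "0 \<in> range (deriv f)"
      using connected_iff_interval[THEN iffD1, rule_format, of "range (deriv f)" "deriv f y" "deriv f x"]
      by simp
    then show False
      using nz by auto
  qed
  then show ?thesis
  proof
    assume "\<forall>x. deriv f x > 0"
    then have "strict_mono f"
      unfolding strict_mono_def using D by (metis DERIV_pos_imp_increasing)
    then show ?thesis ..
  next
    assume "\<forall>x. deriv f x < 0"
    then have "\<forall>x y. x < y \<longrightarrow> f y < f x"
      using D by (metis DERIV_neg_imp_decreasing)
    then show ?thesis ..
  qed
qed

lemma w_w_inverse: "c > 0 \<Longrightarrow> w c (w (1 / c) x) = x"
  by (simp add: w_def not_le)

lemma w_inverse_w: "c > 0 \<Longrightarrow> w (1 / c) (w c x) = x"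
  using w_w_inverse[of "1 / c"] by simp

lemma bij_w: "c > 0 \<Longrightarrow> bij (w c)"
  by (rule o_bij[of "w (1 / c)"]) (simp_all add: fun_eq_iff w_w_inverse w_inverse_w)

lemma inv_w: "c > 0 \<Longrightarrow> inv (w c) = w (1 / c)"
  by (rule inv_unique_comp) (simp_all add: fun_eq_iff w_w_inverse w_inverse_w)

lemma continuous_on_w: "continuous_on UNIV (w c)"
  using Cn_if_le_0[of 0 "\<lambda>x. x" "\<lambda>x. c * x"] Cn_ident Cn_mult[OF Cn_const Cn_ident]
  by (simp add: w_def[abs_def])

lemma strict_mono_w:
  assumes "c > 0"
  shows "strict_mono (w c)"
proof (rule strict_monoI)
  fix x y :: real
  assume "x < y"
  then show "w c x < w c y"
    unfolding w_def using assms mult_strict_left_mono[of x y c] by (smt (verit) mult_pos_pos)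
qed

lemma w_comp_strict_mono:
  assumes "strict_mono f" "f 0 = 0" "e > 0"
  shows "w c \<circ> f \<circ> w e = split_scaling 1 c e f"
proof
  fix x
  have "f x \<le> 0 \<longleftrightarrow> x \<le> 0" for x
    using strict_mono_less_eq[OF assms(1), of x 0] assms(2) by simp
  then show "(w c \<circ> f \<circ> w e) x = split_scaling 1 c e f x"
    using assms(3) by (simp add: w_def split_scaling_def mult_le_0_iff)
qed

lemma w_comp_strict_antimono:
  assumes "\<forall>x y. x < y \<longrightarrow> f y < f x" "f 0 = 0" "e > 0"
  shows "w c \<circ> f \<circ> w e = split_scaling c 1 e f"
proof
  fix x
  have "f x \<le> 0 \<longleftrightarrow> 0 \<le> x" for x
    using assms(1)[rule_format, of x 0] assms(1)[rule_format, of 0 x] assms(2)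
    by (cases x "0::real" rule: linorder_cases) auto
  then show "(w c \<circ> f \<circ> w e) x = split_scaling c 1 e f x"
    using assms(2,3) by (cases "x = 0") (simp_all add: w_def split_scaling_def zero_less_mult_iff not_le)
qed

lemma split_scaling_in_Dk_imp_Ek:
  assumes k: "k \<ge> 1" and f: "f \<in> Dk k" and F: "split_scaling c1 c2 a f \<in> Dk k"
    and a: "a > 0" "a \<noteq> 1"
  shows "c1 = c2 * a" and "split_scaling c1 c2 a f \<in> Ek k"
proof -
  let ?F = "split_scaling c1 c2 a f"
  have sides: "(deriv ^^ m) ?F 0 = c1 * (deriv ^^ m) f 0"
    "(deriv ^^ m) ?F 0 = c2 * a ^ m * (deriv ^^ m) f 0" if "enat m \<le> k" for m
  proof -
    have "continuous_on UNIV ((deriv ^^ m) ?F)"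
      using Dk_Cn[OF F that] unfolding Cn_iff by blast
    then have "isCont ((deriv ^^ m) ?F) 0"
      by (simp add: continuous_on_eq_continuous_at)
    then show "(deriv ^^ m) ?F 0 = c1 * (deriv ^^ m) f 0"
      "(deriv ^^ m) ?F 0 = c2 * a ^ m * (deriv ^^ m) f 0"
      using higher_deriv_split_scaling_0[OF Dk_Cn[OF f that]] by blast+
  qed
  have "enat 1 \<le> k"
    using k by (simp add: one_enat_def)
  from sides[OF this] show c: "c1 = c2 * a"
    using Dk_deriv_nonzero[OF f k, of 0] by simp
  have "(deriv ^^ i) ?F 0 = 0" if "2 \<le> i" "enat i \<le> k" for i
  proof -
    obtain j where i: "i = Suc j" and "j > 0"
      using \<open>2 \<le> i\<close> by (cases i) auto
    then have "a ^ j \<noteq> 1"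
      using a power_eq_1_iff[of a j] by auto
    moreover have "c1 * (deriv ^^ i) f 0 = a ^ j * (c1 * (deriv ^^ i) f 0)"
      using sides[OF that(2)] c i by (simp add: algebra_simps)
    ultimately have "c1 * (deriv ^^ i) f 0 = 0"
      by (metis mult_cancel_right1)
    then show ?thesis
      using sides(1)[OF that(2)] by simp
  qed
  then show "?F \<in> Ek k"
    using F unfolding Ek_def by blast
qed

lemma w_comp_in_Dk:
  assumes k: "k \<ge> 1" and h: "h \<in> Ek k" and c: "c > 0" and e: "e > 0"
    and split: "w c \<circ> h \<circ> w e = split_scaling c1 c2 e h"
    and c12: "c1 = c2 * e" "c2 \<noteq> 0"
  shows "w c \<circ> h \<circ> w e \<in> Dk k"
proof (rule Dk_intro)
  have hD: "h \<in> Dk k" and "bij h" "h 0 = 0"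
    and flat: "\<forall>j. 2 \<le> j \<and> enat j \<le> k \<longrightarrow> (deriv ^^ j) h 0 = 0"
    using h unfolding Ek_def Dk_def by auto
  show "bij (w c \<circ> h \<circ> w e)"
    using \<open>bij h\<close> bij_w[OF c] bij_w[OF e] by (simp add: bij_comp)
  show "(w c \<circ> h \<circ> w e) 0 = 0"
    using \<open>h 0 = 0\<close> by (simp add: w_def)
  show Cn: "\<forall>n. enat n \<le> k \<longrightarrow> Cn n (w c \<circ> h \<circ> w e)"
  proof (intro allI impI)
    fix n assume n: "enat n \<le> k"
    have "\<forall>j. 2 \<le> j \<and> j \<le> n \<longrightarrow> (deriv ^^ j) h 0 = 0"
      using flat n by (meson enat_ord_simps(1) order_trans)
    with Dk_Cn[OF hD n] \<open>h 0 = 0\<close> c12(1) show "Cn n (w c \<circ> h \<circ> w e)"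
      unfolding split by (rule Cn_split_scaling)
  qed
  have comp: "continuous_on UNIV (g \<circ> f)" if "continuous_on UNIV f" "continuous_on UNIV g"
    for f g :: "real \<Rightarrow> real"
    using that continuous_on_compose continuous_on_subset subset_UNIV by metis
  have "inv (w c \<circ> h \<circ> w e) = w (1 / e) \<circ> inv h \<circ> w (1 / c)"
    using \<open>bij h\<close> bij_w[OF c] bij_w[OF e] by (simp add: o_inv_distrib bij_comp inv_w c e o_assoc)
  moreover have "continuous_on UNIV (inv h)"
    using Dk_inv_Cn[OF hD, of 0] by (simp add: zero_enat_def[symmetric])
  ultimately show "continuous_on UNIV (inv (w c \<circ> h \<circ> w e))"
    by (metis comp continuous_on_w)
  have k1: "enat 1 \<le> k"
    using k by (simp add: one_enat_def)
  then have "Cn 1 (split_scaling c1 c2 e h)"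
    using Cn unfolding split by blast
  moreover have "Cn 1 h"
    using Dk_Cn[OF hD k1] .
  moreover have "c1 \<noteq> 0"
    using c12 e by simp
  ultimately show "\<forall>x. deriv (w c \<circ> h \<circ> w e) x \<noteq> 0"
    unfolding split using Dk_deriv_nonzero[OF hD k] c12(2) e
    by (intro allI deriv_split_scaling_nonzero) auto
qed

lemma Dk_inter_wDw_cases:
  assumes k: "k \<ge> 1" and a: "a > 0" "a \<noteq> 1" and b: "b > 0"
    and h: "h \<in> Dk k \<inter> wDw k b a"
  shows "a * b = 1 \<and> h \<in> Ek_plus k \<or> a = b \<and> h \<in> Ek_minus k"
proof -
  obtain f where f: "f \<in> Dk k" and hf: "h = w b \<circ> f \<circ> w a"
    using h unfolding wDw_def by blast
  have hD: "h \<in> Dk k" and "f 0 = 0"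
    using h f unfolding Dk_def by auto
  from Dk_strictly_monotone[OF f k] show ?thesis
  proof
    assume mono: "strict_mono f"
    then have split: "h = split_scaling 1 b a f"
      unfolding hf using \<open>f 0 = 0\<close> a(1) by (rule w_comp_strict_mono)
    with split_scaling_in_Dk_imp_Ek[OF k f _ a] hD have "1 = b * a" "h \<in> Ek k"
      by blast+
    moreover have "strict_mono h"
      unfolding hf using strict_mono_w[OF a(1)] strict_mono_w[OF b] mono by (intro strict_mono_o)
    ultimately show ?thesis
      unfolding Ek_plus_def by (simp add: mult.commute)
  next
    assume anti: "\<forall>x y. x < y \<longrightarrow> f y < f x"
    then have split: "h = split_scaling b 1 a f"
      unfolding hf using \<open>f 0 = 0\<close> a(1) by (rule w_comp_strict_antimono)
    with split_scaling_in_Dk_imp_Ek[OF k f _ a] hD have "b = 1 * a" "h \<in> Ek k"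
      by blast+
    moreover have "\<forall>x y. x < y \<longrightarrow> h y < h x"
      unfolding hf using strict_mono_w[OF a(1)] strict_mono_w[OF b] anti
      by (simp add: strict_mono_def)
    ultimately show ?thesis
      unfolding Ek_minus_def by simp
  qed
qed

lemma w_comp_mem_wDw: "f \<in> Dk k \<Longrightarrow> w b \<circ> f \<circ> w a \<in> wDw k b a"
  unfolding wDw_def by blast

lemma w_comp_w_inverse:
  assumes "b > 0" "a > 0"
  shows "w b \<circ> (w (1 / b) \<circ> h \<circ> w (1 / a)) \<circ> w a = h"
  using assms by (simp add: fun_eq_iff w_w_inverse w_inverse_w)

lemma Ek_plus_subset_wDw:
  assumes k: "k \<ge> 1" and "a > 0" "b > 0" "a * b = 1"
  shows "Ek_plus k \<subseteq> wDw k b a"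
proof
  fix h assume "h \<in> Ek_plus k"
  then have h: "h \<in> Ek k" and "strict_mono h" "h 0 = 0"
    unfolding Ek_plus_def Ek_def Dk_def by auto
  then have split: "w (1 / b) \<circ> h \<circ> w (1 / a) = split_scaling 1 (1 / b) (1 / a) h"
    using \<open>a > 0\<close> by (intro w_comp_strict_mono) auto
  have "w (1 / b) \<circ> h \<circ> w (1 / a) \<in> Dk k"
    by (rule w_comp_in_Dk[OF k h _ _ split]) (use assms in \<open>auto simp: field_simps\<close>)
  then have "w b \<circ> (w (1 / b) \<circ> h \<circ> w (1 / a)) \<circ> w a \<in> wDw k b a"
    by (rule w_comp_mem_wDw)
  then show "h \<in> wDw k b a"
    using assms by (simp add: w_comp_w_inverse)
qed

lemma Ek_minus_subset_wDw:
  assumes k: "k \<ge> 1" and "a > 0" "a = b"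
  shows "Ek_minus k \<subseteq> wDw k b a"
proof
  fix h assume "h \<in> Ek_minus k"
  then have h: "h \<in> Ek k" and "\<forall>x y. x < y \<longrightarrow> h y < h x" "h 0 = 0"
    unfolding Ek_minus_def Ek_def Dk_def by auto
  then have split: "w (1 / b) \<circ> h \<circ> w (1 / a) = split_scaling (1 / b) 1 (1 / a) h"
    using \<open>a > 0\<close> by (intro w_comp_strict_antimono) auto
  have "w (1 / b) \<circ> h \<circ> w (1 / a) \<in> Dk k"
    by (rule w_comp_in_Dk[OF k h _ _ split]) (use assms in auto)
  then have "w b \<circ> (w (1 / b) \<circ> h \<circ> w (1 / a)) \<circ> w a \<in> wDw k b a"
    by (rule w_comp_mem_wDw)
  then show "h \<in> wDw k b a"
    using assms by (simp add: w_comp_w_inverse)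
qed

theorem corollary5p17:
  fixes k :: enat and a b :: real
  assumes "k \<ge> 1" and "a > 0" and "b > 0" and "a \<noteq> 1" and "b \<noteq> 1"
  shows "(a \<noteq> b \<and> a \<noteq> 1 / b \<longrightarrow> Dk k \<inter> wDw k b a = {})
       \<and> (a * b = 1 \<longrightarrow> Dk k \<inter> wDw k b a = Ek_plus k)
       \<and> (a = b \<longrightarrow> Dk k \<inter> wDw k b a = Ek_minus k)"
proof -
  have cases: "a * b = 1 \<and> h \<in> Ek_plus k \<or> a = b \<and> h \<in> Ek_minus k"
    if "h \<in> Dk k \<inter> wDw k b a" for h
    using Dk_inter_wDw_cases assms that by blast
  have Ek_subset_Dk: "Ek_plus k \<subseteq> Dk k" "Ek_minus k \<subseteq> Dk k"
    unfolding Ek_plus_def Ek_minus_def Ek_def by auto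
  have not_both: "\<not> (a * b = 1 \<and> a = b)"
    using power2_eq_1_iff[of a] assms(2,4) by (auto simp: power2_eq_square)
  have "a * b = 1 \<longleftrightarrow> a = 1 / b"
    using assms(3) by (auto simp: field_simps)
  then show ?thesis
    using cases not_both Ek_subset_Dk Ek_plus_subset_wDw[OF assms(1-3)]
      Ek_minus_subset_wDw[OF assms(1,2)]
    by (intro conjI impI equalityI subsetI) blast+
qed

end
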